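(* Let $d\ge2$, $\tau>0$ and $\varepsilon\in(0,1]$. For any $t\in(0,\tau]$ and $x,x'\in\mathbb{R}$ with $|x-x'|\le h^{-1}(1/t)/4$ and $|x-x'|\le\varepsilon/4$, $$\tilde g^{(\varepsilon)}_t(x')\le\tilde g^{(\varepsilon)}_t(x/2).$$
   Context: Let $\nu$ be a symmetric density of an infinite Lévy measure on $\mathbb{R}$ (with $\int(x^2\wedge1)\nu<\infty$), such that for some $\eta_4>0$, $\nu\in C^1(0,\eta_4)$, $\nu'<0$ and $-\nu'(x)/x$ decreasing on $(0,\eta_4)$. Let $\psi(\xi)=\int(1-\cos(\xi x))\nu(x)dx$ satisfy $\psi(\lambda\theta)\ge\underline{C}\lambda^\alpha\psi(\theta)$ for $\lambda\ge1,\theta\ge0$ and $\psi(\lambda\theta)\le\overline{C}\lambda^\beta\psi(\theta)$ for $\lambda\ge1,\theta\ge1$, with $0<\alpha\le\beta<2$. $h(r)=\int(1\wedge x^2r^{-2})\nu(x)dx$ for $r>0$ (continuous, strictly decreasing from $\infty$ to $0$), $h^{-1}$ its inverse. $\tilde g^{(\varepsilon)}_t(x)=\frac{1}{h^{-1}(1/t)}\wedge\frac{t h(|x|)}{|x|}$ if $|x|<\varepsilon$ (with $h(0)/0=\infty$), and $\tilde g^{(\varepsilon)}_t(x)=c_\varepsilon t^{(d+\beta-1)/\alpha}e^{-|x|}$ if $|x|\ge\varepsilon$, where $c_\varepsilon=\Big(\frac{1}{h^{-1}(1/\tau)}\wedge\frac{\tau h(\varepsilon)}{\varepsilon}\Big)\frac{e^{\varepsilon}}{\tau^{(d+\beta-1)/\alpha}}$.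 *)

theory Defs
  imports "HOL-Analysis.Analysis"
begin

definition psi_fn :: "(real \<Rightarrow> real) \<Rightarrow> real \<Rightarrow> real" where
  "psi_fn \<nu> \<xi> = enn2real (\<integral>\<^sup>+ x. ennreal ((1 - cos (\<xi> * x)) * \<nu> x) \<partial>lborel)"

definition h_fn :: "(real \<Rightarrow> real) \<Rightarrow> real \<Rightarrow> real" where
  "h_fn \<nu> r = enn2real (\<integral>\<^sup>+ x. ennreal (min 1 (x\<^sup>2 / r\<^sup>2) * \<nu> x) \<partial>lborel)"

definition h_inv :: "(real \<Rightarrow> real) \<Rightarrow> real \<Rightarrow> real" where
  "h_inv \<nu> s = (THE r. r > 0 \<and> h_fn \<nu> r = s)"

text \<open>The function tilde g^(eps)_t(x), with h(0)/0 = infinity.\<close>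
definition g_tilde ::
  "(real \<Rightarrow> real) \<Rightarrow> nat \<Rightarrow> real \<Rightarrow> real \<Rightarrow> real \<Rightarrow> real \<Rightarrow> real \<Rightarrow> real \<Rightarrow> real" where
  "g_tilde \<nu> d \<alpha> \<beta> \<tau> \<epsilon> t x =
     (if \<bar>x\<bar> < \<epsilon> then
        (if x = 0 then 1 / h_inv \<nu> (1 / t)
         else min (1 / h_inv \<nu> (1 / t)) (t * h_fn \<nu> \<bar>x\<bar> / \<bar>x\<bar>))
      else
        (min (1 / h_inv \<nu> (1 / \<tau>)) (\<tau> * h_fn \<nu> \<epsilon> / \<epsilon>) * exp \<epsilon>
           / \<tau> powr ((real d + \<beta> - 1) / \<alpha>))
        * t powr ((real d + \<beta> - 1) / \<alpha>) * exp (- \<bar>x\<bar>))"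

end

(*
  For 0 < t <= tau the function g_tilde_t is a nonincreasing function of |x|: below eps because
  h(r)/r decreases, beyond eps because of the factor exp(-|x|), and across eps because the
  exponent (d + beta - 1)/alpha is at least 1, so that the far branch is at most the near branch
  at eps.  It attains its maximum 1/h^-1(1/t) on the plateau |x| <= min(h^-1(1/t), eps).
  If |x'| >= |x/2| monotonicity gives the claim; otherwise |x/2| < |x - x'|, so x/2 lies on the
  plateau.  That h^-1 is well defined (h is continuous and decreases strictly from infinity to 0)
  only uses that nu is the density of an infinite Levy measure.
*)
theory Submission
  imports Defs "HOL-Real_Asymp.Real_Asymp"
begin

lemma h_fn_nonneg: "0 \<le> h_fn \<nu> r"
  unfolding h_fn_def by simp

lemma min_one_sq_div_le:
  fixes r y :: real
  assumes "0 < r"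
  shows "min 1 (y\<^sup>2 / r\<^sup>2) \<le> max 1 (1 / r\<^sup>2) * min (y\<^sup>2) 1"
proof (cases "y\<^sup>2 \<le> 1")
  case True
  have "y\<^sup>2 / r\<^sup>2 = (1 / r\<^sup>2) * y\<^sup>2"
    by simp
  also have "\<dots> \<le> max 1 (1 / r\<^sup>2) * y\<^sup>2"
    by (intro mult_right_mono) auto
  finally show ?thesis
    using True by (simp add: min_def)
next
  case False
  then show ?thesis
    by (simp add: min_le_iff_disj le_max_iff_disj)
qed

lemma min_one_sq_div_antimono:
  fixes r s y :: real
  assumes "0 < r" "r \<le> s"
  shows "min 1 (y\<^sup>2 / s\<^sup>2) \<le> min 1 (y\<^sup>2 / r\<^sup>2)"
  using assms by (intro min.mono divide_left_mono) (auto intro: power_mono)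

locale levy_density =
  fixes \<nu> :: "real \<Rightarrow> real"
  assumes nu_borel: "\<nu> \<in> borel_measurable borel"
    and nu_nonneg: "\<And>y. 0 \<le> \<nu> y"
    and nu_levy: "(\<integral>\<^sup>+ y. ennreal (min (y\<^sup>2) 1 * \<nu> y) \<partial>lborel) < \<infinity>"
begin

lemma nu_borel_lborel [measurable]: "\<nu> \<in> borel_measurable lborel"
  using nu_borel by simp

lemma integrable_levy_weight: "integrable lborel (\<lambda>y. min (y\<^sup>2) 1 * \<nu> y)"
  by (rule integrableI_nonneg) (use nu_levy nu_nonneg in auto)

lemma integrable_h_integrand:
  assumes "0 < r"
  shows "integrable lborel (\<lambda>y. min 1 (y\<^sup>2 / r\<^sup>2) * \<nu> y)"
proof (rule Bochner_Integration.integrable_bound)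
  show "integrable lborel (\<lambda>y. max 1 (1 / r\<^sup>2) * (min (y\<^sup>2) 1 * \<nu> y))"
    using integrable_levy_weight by simp
  show "AE y in lborel. norm (min 1 (y\<^sup>2 / r\<^sup>2) * \<nu> y)
          \<le> norm (max 1 (1 / r\<^sup>2) * (min (y\<^sup>2) 1 * \<nu> y))"
    using min_one_sq_div_le[OF assms] nu_nonneg
    by (intro AE_I2) (simp add: mult.assoc[symmetric] mult_right_mono)
qed measurable

lemma h_fn_eq_integral:
  assumes "0 < r"
  shows "h_fn \<nu> r = (\<integral>y. min 1 (y\<^sup>2 / r\<^sup>2) * \<nu> y \<partial>lborel)"
  unfolding h_fn_def
  by (rule enn2real_nn_integral_eq_integral) (use assms nu_nonneg integrable_h_integrand in auto)

lemma h_fn_antimono: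
  assumes "0 < r" "r \<le> s"
  shows "h_fn \<nu> s \<le> h_fn \<nu> r"
  using assms nu_nonneg min_one_sq_div_antimono[OF assms]
  by (auto simp: h_fn_eq_integral intro!: integral_mono integrable_h_integrand mult_right_mono)

lemma h_fn_sq_mono:
  assumes "0 < r" "r \<le> s"
  shows "r\<^sup>2 * h_fn \<nu> r \<le> s\<^sup>2 * h_fn \<nu> s"
proof -
  have "0 < s"
    using assms by simp
  have scale: "q\<^sup>2 * (min 1 (y\<^sup>2 / q\<^sup>2) * \<nu> y) = min (q\<^sup>2) (y\<^sup>2) * \<nu> y"
    if "0 < q" for q y :: real
    using that by (auto simp: min_def field_simps)
  show ?thesis
    unfolding h_fn_eq_integral[OF assms(1)] h_fn_eq_integral[OF \<open>0 < s\<close>]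
      integral_mult_right_zero[symmetric]
  proof (rule integral_mono)
    fix y
    have "min (r\<^sup>2) (y\<^sup>2) \<le> min (s\<^sup>2) (y\<^sup>2)"
      using assms by (intro min.mono) (auto intro: power_mono)
    then show "r\<^sup>2 * (min 1 (y\<^sup>2 / r\<^sup>2) * \<nu> y) \<le> s\<^sup>2 * (min 1 (y\<^sup>2 / s\<^sup>2) * \<nu> y)"
      unfolding scale[OF assms(1)] scale[OF \<open>0 < s\<close>] using nu_nonneg by (rule mult_right_mono)
  qed (use assms \<open>0 < s\<close> integrable_h_integrand in simp_all)
qed

lemma h_fn_diff_le:
  assumes "0 < a" "a \<le> r" "r \<le> s"
  shows "h_fn \<nu> r - h_fn \<nu> s \<le> 2 * s * h_fn \<nu> a / a\<^sup>2 * (s - r)"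
proof -
  have "0 < r"
    using assms by simp
  have "r\<^sup>2 * (h_fn \<nu> r - h_fn \<nu> s) \<le> (s\<^sup>2 - r\<^sup>2) * h_fn \<nu> s"
    using h_fn_sq_mono[OF \<open>0 < r\<close> assms(3)] by (simp add: algebra_simps)
  also have "\<dots> \<le> (s\<^sup>2 - r\<^sup>2) * h_fn \<nu> a"
    using assms h_fn_antimono[of a s] by (intro mult_left_mono) (auto intro: power_mono)
  also have "\<dots> = (s + r) * (s - r) * h_fn \<nu> a"
    by (simp add: power2_eq_square algebra_simps)
  also have "\<dots> \<le> 2 * s * (s - r) * h_fn \<nu> a"
    using assms h_fn_nonneg[of \<nu> a] by (intro mult_right_mono) auto
  finally have "r\<^sup>2 * (h_fn \<nu> r - h_fn \<nu> s) \<le> 2 * s * (s - r) * h_fn \<nu> a" .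
  moreover have "a\<^sup>2 * (h_fn \<nu> r - h_fn \<nu> s) \<le> r\<^sup>2 * (h_fn \<nu> r - h_fn \<nu> s)"
    using assms h_fn_antimono[OF \<open>0 < r\<close> assms(3)]
    by (intro mult_right_mono) (auto intro: power_mono)
  ultimately show ?thesis
    using assms by (simp add: field_simps)
qed

lemma continuous_on_h_fn:
  assumes "0 < a"
  shows "continuous_on {a..b} (h_fn \<nu>)"
proof (rule lipschitz_on_continuous_on)
  have bound: "\<bar>h_fn \<nu> r - h_fn \<nu> s\<bar> \<le> 2 * max a b * h_fn \<nu> a / a\<^sup>2 * (s - r)"
    if "a \<le> r" "r \<le> s" "s \<le> b" for r s
  proof -
    have "h_fn \<nu> r - h_fn \<nu> s \<le> 2 * s * h_fn \<nu> a / a\<^sup>2 * (s - r)"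
      using h_fn_diff_le[OF assms that(1,2)] .
    also have "\<dots> \<le> 2 * max a b * h_fn \<nu> a / a\<^sup>2 * (s - r)"
      using that h_fn_nonneg[of \<nu> a]
      by (intro mult_right_mono divide_right_mono mult_right_mono) auto
    finally show ?thesis
      using assms that h_fn_antimono[of r s] by simp
  qed
  have "dist (h_fn \<nu> x) (h_fn \<nu> y) \<le> 2 * max a b * h_fn \<nu> a / a\<^sup>2 * dist x y"
    if "x \<in> {a..b}" "y \<in> {a..b}" for x y
  proof (cases "x \<le> y")
    case True
    then show ?thesis
      using that bound[of x y] by (simp add: dist_real_def abs_minus_commute)
  next
    case False
    then show ?thesis
      using that bound[of y x] by (simp add: dist_real_def)
  qed
  then show "(2 * max a b * h_fn \<nu> a / a\<^sup>2)-lipschitz_on {a..b} (h_fn \<nu>)"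
    using assms h_fn_nonneg[of \<nu> a] by (intro lipschitz_onI) auto
qed

lemma h_fn_tendsto_0: "(h_fn \<nu> \<longlongrightarrow> 0) at_top"
proof -
  have "((\<lambda>r. \<integral>y. min 1 (y\<^sup>2 / r\<^sup>2) * \<nu> y \<partial>lborel)
          \<longlongrightarrow> integral\<^sup>L (lborel :: real measure) (\<lambda>_. 0)) at_top"
  proof (rule integral_dominated_convergence_at_top[where w = "\<lambda>y. min (y\<^sup>2) 1 * \<nu> y"])
    show "AE y in lborel. ((\<lambda>r. min 1 (y\<^sup>2 / r\<^sup>2) * \<nu> y) \<longlongrightarrow> 0) at_top"
      by (intro AE_I2) real_asymp
    have "norm (min 1 (y\<^sup>2 / r\<^sup>2) * \<nu> y) \<le> min (y\<^sup>2) 1 * \<nu> y" if "1 \<le> r" for r y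
    proof -
      have "y\<^sup>2 / r\<^sup>2 \<le> y\<^sup>2"
        using that by (simp add: divide_le_eq mult_le_cancel_left1 one_le_power)
      then show ?thesis
        using nu_nonneg[of y] by (auto intro!: mult_right_mono simp: min_le_iff_disj)
    qed
    then show "\<forall>\<^sub>F r in at_top. AE y in lborel.
                 norm (min 1 (y\<^sup>2 / r\<^sup>2) * \<nu> y) \<le> min (y\<^sup>2) 1 * \<nu> y"
      by (intro eventually_at_top_linorderI[of 1] AE_I2)
  qed (use integrable_levy_weight in simp_all)
  moreover have "\<forall>\<^sub>F r in at_top. (\<integral>y. min 1 (y\<^sup>2 / r\<^sup>2) * \<nu> y \<partial>lborel) = h_fn \<nu> r"
    by (intro eventually_at_top_linorderI[of 1]) (simp add: h_fn_eq_integral)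
  ultimately show ?thesis
    by (simp add: tendsto_cong)
qed

lemma nn_integral_nu_finite_if_AE_vanishing_near_0:
  assumes "0 < s" and vanish: "AE y in lborel. \<bar>y\<bar> < s \<longrightarrow> \<nu> y = 0"
  shows "(\<integral>\<^sup>+ y. ennreal (\<nu> y) \<partial>lborel) < \<infinity>"
proof -
  have "(\<integral>\<^sup>+ y. ennreal (\<nu> y) \<partial>lborel)
        \<le> (\<integral>\<^sup>+ y. ennreal (max 1 (1 / s\<^sup>2) * (min (y\<^sup>2) 1 * \<nu> y)) \<partial>lborel)"
    using vanish
  proof (intro nn_integral_mono_AE, eventually_elim)
    case (elim y)
    show ?case
    proof (cases "\<bar>y\<bar> < s")
      case False
      then have "s\<^sup>2 \<le> y\<^sup>2"
        using \<open>0 < s\<close> by (metis abs_le_square_iff abs_of_pos not_less)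
      then have "1 \<le> min 1 (y\<^sup>2 / s\<^sup>2)"
        using \<open>0 < s\<close> by simp
      also have "\<dots> \<le> max 1 (1 / s\<^sup>2) * min (y\<^sup>2) 1"
        by (rule min_one_sq_div_le[OF \<open>0 < s\<close>])
      finally have "1 * \<nu> y \<le> (max 1 (1 / s\<^sup>2) * min (y\<^sup>2) 1) * \<nu> y"
        using nu_nonneg[of y] by (rule mult_right_mono)
      then show ?thesis
        by (simp add: mult.assoc ennreal_leI)
    qed (use elim in simp)
  qed
  also have "\<dots> = ennreal (max 1 (1 / s\<^sup>2)) * (\<integral>\<^sup>+ y. ennreal (min (y\<^sup>2) 1 * \<nu> y) \<partial>lborel)"
    using nu_nonneg by (subst nn_integral_cmult[symmetric]) (auto simp: ennreal_mult)
  also have "\<dots> < \<infinity>"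
    using nu_levy by (simp add: ennreal_mult_less_top)
  finally show ?thesis .
qed

lemma h_fn_div_antimono:
  assumes "0 < r" "r \<le> s"
  shows "h_fn \<nu> s / s \<le> h_fn \<nu> r / r"
  using assms h_fn_antimono[OF assms] h_fn_nonneg[of \<nu> r] by (intro frac_le) auto

lemma g_tilde_near_antimono:
  assumes "0 \<le> t" "\<bar>y\<bar> \<le> \<bar>y'\<bar>" "\<bar>y'\<bar> < \<epsilon>"
  shows "g_tilde \<nu> d \<alpha> \<beta> \<tau> \<epsilon> t y' \<le> g_tilde \<nu> d \<alpha> \<beta> \<tau> \<epsilon> t y"
proof (cases "y = 0")
  case False
  then have "t * h_fn \<nu> \<bar>y'\<bar> / \<bar>y'\<bar> \<le> t * h_fn \<nu> \<bar>y\<bar> / \<bar>y\<bar>"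
    using assms h_fn_div_antimono[of "\<bar>y\<bar>" "\<bar>y'\<bar>"]
    by (simp add: mult_left_mono times_divide_eq_right[symmetric] del: times_divide_eq_right)
  then show ?thesis
    using False assms by (auto simp: g_tilde_def min_le_iff_disj)
qed (use assms in \<open>auto simp: g_tilde_def\<close>)

lemma g_tilde_near_lower_bound:
  assumes "0 \<le> t" "\<bar>y\<bar> < \<epsilon>"
  shows "min (1 / h_inv \<nu> (1 / t)) (t * h_fn \<nu> \<epsilon> / \<epsilon>) \<le> g_tilde \<nu> d \<alpha> \<beta> \<tau> \<epsilon> t y"
proof (cases "y = 0")
  case False
  then have "t * h_fn \<nu> \<epsilon> / \<epsilon> \<le> t * h_fn \<nu> \<bar>y\<bar> / \<bar>y\<bar>"
    using assms h_fn_div_antimono[of "\<bar>y\<bar>" \<epsilon>]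
    by (simp add: mult_left_mono times_divide_eq_right[symmetric] del: times_divide_eq_right)
  then show ?thesis
    using False assms by (auto simp: g_tilde_def min_le_iff_disj)
qed (use assms in \<open>auto simp: g_tilde_def\<close>)

end

locale infinite_levy_density = levy_density +
  assumes nu_infinite_mass: "(\<integral>\<^sup>+ y. ennreal (\<nu> y) \<partial>lborel) = \<infinity>"
begin

lemma h_fn_strict_antimono:
  assumes "0 < r" "r < s"
  shows "h_fn \<nu> s < h_fn \<nu> r"
proof (rule ccontr)
  assume "\<not> h_fn \<nu> s < h_fn \<nu> r"
  then have "h_fn \<nu> r = h_fn \<nu> s"
    using assms h_fn_antimono[of r s] by simp
  have "0 < s"
    using assms by simp
  define D where "D y = (min 1 (y\<^sup>2 / r\<^sup>2) - min 1 (y\<^sup>2 / s\<^sup>2)) * \<nu> y" for y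
  have D_nonneg: "0 \<le> D y" for y
    using assms nu_nonneg[of y] min_one_sq_div_antimono[of r s y] unfolding D_def by simp
  have D_integrable: "integrable lborel D"
    using integrable_h_integrand[OF assms(1)] integrable_h_integrand[OF \<open>0 < s\<close>]
    unfolding D_def left_diff_distrib by simp
  have "integral\<^sup>L lborel D = 0"
    using \<open>h_fn \<nu> r = h_fn \<nu> s\<close>
      integrable_h_integrand[OF assms(1)] integrable_h_integrand[OF \<open>0 < s\<close>]
    unfolding D_def left_diff_distrib h_fn_eq_integral[OF assms(1)] h_fn_eq_integral[OF \<open>0 < s\<close>]
    by simp
  then have "AE y in lborel. D y = 0"
    using integral_nonneg_eq_0_iff_AE[OF D_integrable] D_nonneg by simp
  then have "AE y in lborel. \<bar>y\<bar> < s \<longrightarrow> \<nu> y = 0"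
    using AE_lborel_singleton[of 0]
  proof eventually_elim
    case (elim y)
    show ?case
    proof
      assume "\<bar>y\<bar> < s"
      then have "y\<^sup>2 / s\<^sup>2 < 1"
        using \<open>0 < s\<close> by (simp add: abs_square_less_1 power_divide[symmetric])
      moreover have "y\<^sup>2 / s\<^sup>2 < y\<^sup>2 / r\<^sup>2"
        using assms elim by (intro divide_strict_left_mono) (auto intro: power_strict_mono)
      ultimately have "min 1 (y\<^sup>2 / s\<^sup>2) < min 1 (y\<^sup>2 / r\<^sup>2)"
        by simp
      then have "min 1 (y\<^sup>2 / r\<^sup>2) - min 1 (y\<^sup>2 / s\<^sup>2) \<noteq> 0"
        by linarith
      then show "\<nu> y = 0"
        using elim unfolding D_def by simp
    qed
  qed
  then show False
    using nn_integral_nu_finite_if_AE_vanishing_near_0[OF \<open>0 < s\<close>] nu_infinite_mass by simp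
qed

lemma h_fn_unbounded: "\<exists>r>0. M < h_fn \<nu> r"
proof (rule ccontr)
  assume "\<not> (\<exists>r>0. M < h_fn \<nu> r)"
  then have bounded: "h_fn \<nu> r \<le> M" if "0 < r" for r
    using that by (meson not_less)
  define F where "F n y = ennreal (min 1 (y\<^sup>2 / (1 / real (Suc n))\<^sup>2) * \<nu> y)" for n y
  have F_SUP: "(SUP n. F n y) = ennreal (\<nu> y)" if "y \<noteq> 0" for y
  proof (rule antisym)
    show "(SUP n. F n y) \<le> ennreal (\<nu> y)"
      using nu_nonneg[of y] by (auto simp: F_def intro!: SUP_least ennreal_leI mult_left_le_one_le)
    define N where "N = nat \<lceil>1 / \<bar>y\<bar>\<rceil>"
    have "1 / \<bar>y\<bar> \<le> real (Suc N)"
      unfolding N_def by linarith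
    then have "1 \<le> \<bar>y\<bar> * real (Suc N)"
      using that by (simp add: field_simps)
    then have "1 \<le> (\<bar>y\<bar> * real (Suc N))\<^sup>2"
      by (simp add: one_le_power)
    then have "1 \<le> y\<^sup>2 / (1 / real (Suc N))\<^sup>2"
      by (simp add: power_mult_distrib power_divide)
    then have "F N y = ennreal (\<nu> y)"
      by (simp add: F_def)
    then show "ennreal (\<nu> y) \<le> (SUP n. F n y)"
      by (metis SUP_upper UNIV_I)
  qed
  have F_integral: "integral\<^sup>N lborel (F n) = ennreal (h_fn \<nu> (1 / real (Suc n)))" for n
    unfolding F_def h_fn_def
    by (simp add: ennreal_enn2real_if nn_integral_eq_integral integrable_h_integrand nu_nonneg)
  have "(\<integral>\<^sup>+ y. ennreal (\<nu> y) \<partial>lborel) = (\<integral>\<^sup>+ y. (SUP n. F n y) \<partial>lborel)"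
    by (intro nn_integral_cong_AE) (use AE_lborel_singleton[of 0] F_SUP in \<open>auto elim: AE_mp\<close>)
  also have "\<dots> = (SUP n. integral\<^sup>N lborel (F n))"
  proof (rule nn_integral_monotone_convergence_SUP)
    show "incseq F"
      using min_one_sq_div_antimono[of "1 / real (Suc (Suc n))" "1 / real (Suc n)" for n] nu_nonneg
      by (intro incseq_SucI le_funI) (auto simp: F_def frac_le intro!: ennreal_leI mult_right_mono)
  qed (simp add: F_def)
  also have "\<dots> \<le> ennreal M"
    using bounded by (auto simp: F_integral intro!: SUP_least ennreal_leI)
  finally show False
    using nu_infinite_mass by (simp add: top_unique)
qed

lemma ex1_h_fn_eq:
  assumes "0 < s"
  shows "\<exists>!r. 0 < r \<and> h_fn \<nu> r = s"
proof (rule ex_ex1I)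
  obtain a where a: "0 < a" "s < h_fn \<nu> a"
    using h_fn_unbounded by blast
  obtain b where b: "a \<le> b" "h_fn \<nu> b < s"
    using h_fn_tendsto_0 assms
    by (metis eventually_at_top_linorder order_tendstoD(2) max.cobounded1 max.cobounded2)
  have "\<exists>r. a \<le> r \<and> r \<le> b \<and> h_fn \<nu> r = s"
    using a b continuous_on_h_fn[OF a(1), of b] by (intro IVT2') auto
  then show "\<exists>r. 0 < r \<and> h_fn \<nu> r = s"
    using a(1) by (metis less_le_trans)
next
  show "r = r'" if "0 < r \<and> h_fn \<nu> r = s" "0 < r' \<and> h_fn \<nu> r' = s" for r r'
    using that h_fn_strict_antimono[of r r'] h_fn_strict_antimono[of r' r]
    by (cases r r' rule: linorder_cases) auto
qed

lemma h_inv_pos: "0 < s \<Longrightarrow> 0 < h_inv \<nu> s"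
  and h_fn_h_inv: "0 < s \<Longrightarrow> h_fn \<nu> (h_inv \<nu> s) = s"
  using theI'[OF ex1_h_fn_eq] unfolding h_inv_def by auto

lemma h_inv_antimono:
  assumes "0 < s" "s \<le> s'"
  shows "h_inv \<nu> s' \<le> h_inv \<nu> s"
  using assms h_fn_strict_antimono[OF h_inv_pos[OF assms(1)], of "h_inv \<nu> s'"]
  by (auto simp: h_fn_h_inv not_le[symmetric])

lemma g_tilde_eq_max:
  assumes "0 < t" "\<bar>y\<bar> \<le> h_inv \<nu> (1 / t)" "\<bar>y\<bar> < \<epsilon>"
  shows "g_tilde \<nu> d \<alpha> \<beta> \<tau> \<epsilon> t y = 1 / h_inv \<nu> (1 / t)"
proof (cases "y = 0")
  case False
  then have "1 / t \<le> h_fn \<nu> \<bar>y\<bar>"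
    using assms h_fn_antimono[of "\<bar>y\<bar>" "h_inv \<nu> (1 / t)"] by (simp add: h_fn_h_inv)
  then have "1 / \<bar>y\<bar> \<le> t * h_fn \<nu> \<bar>y\<bar> / \<bar>y\<bar>"
    using assms False by (simp add: divide_right_mono field_simps)
  moreover have "1 / h_inv \<nu> (1 / t) \<le> 1 / \<bar>y\<bar>"
    using assms False by (simp add: frac_le)
  ultimately show ?thesis
    using assms False by (simp add: g_tilde_def)
qed (use assms in \<open>simp add: g_tilde_def\<close>)

lemma g_tilde_far_upper_bound:
  assumes "0 < \<alpha>" "\<alpha> \<le> real d + \<beta> - 1" "0 < t" "t \<le> \<tau>" "0 < \<epsilon>" "\<epsilon> \<le> \<bar>y\<bar>"
  shows "g_tilde \<nu> d \<alpha> \<beta> \<tau> \<epsilon> t y \<le> min (1 / h_inv \<nu> (1 / t)) (t * h_fn \<nu> \<epsilon> / \<epsilon>)"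
proof -
  define p where "p = (real d + \<beta> - 1) / \<alpha>"
  define m where "m = min (1 / h_inv \<nu> (1 / \<tau>)) (\<tau> * h_fn \<nu> \<epsilon> / \<epsilon>)"
  have "1 \<le> p"
    using assms by (simp add: p_def)
  have "0 < \<tau>"
    using assms by simp
  then have "0 \<le> m"
    using assms h_inv_pos[of "1 / \<tau>"] h_fn_nonneg[of \<nu> \<epsilon>] by (simp add: m_def)
  have "g_tilde \<nu> d \<alpha> \<beta> \<tau> \<epsilon> t y = m * exp \<epsilon> / \<tau> powr p * t powr p * exp (- \<bar>y\<bar>)"
    using assms by (simp add: g_tilde_def m_def p_def)
  also have "\<dots> \<le> m * exp \<epsilon> / \<tau> powr p * t powr p * exp (- \<epsilon>)"
    using assms \<open>0 \<le> m\<close> by (intro mult_left_mono) auto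
  also have "\<dots> = m * (t / \<tau>) powr p"
    using assms by (simp add: powr_divide exp_minus field_simps)
  also have "\<dots> \<le> m * (t / \<tau>)"
    using assms \<open>1 \<le> p\<close> \<open>0 \<le> m\<close> powr_mono'[of 1 p "t / \<tau>"] by (intro mult_left_mono) auto
  also have "\<dots> \<le> min (1 / h_inv \<nu> (1 / t)) (t * h_fn \<nu> \<epsilon> / \<epsilon>)"
  proof (rule min.boundedI)
    have "m * (t / \<tau>) \<le> m"
      using assms \<open>0 \<le> m\<close> by (intro mult_left_le) auto
    also have "\<dots> \<le> 1 / h_inv \<nu> (1 / \<tau>)"
      by (simp add: m_def)
    also have "\<dots> \<le> 1 / h_inv \<nu> (1 / t)"
      using assms h_inv_pos[of "1 / t"] h_inv_antimono[of "1 / \<tau>" "1 / t"]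
      by (intro divide_left_mono) (auto simp: frac_le)
    finally show "m * (t / \<tau>) \<le> 1 / h_inv \<nu> (1 / t)" .
    have "m * (t / \<tau>) \<le> \<tau> * h_fn \<nu> \<epsilon> / \<epsilon> * (t / \<tau>)"
      using assms by (intro mult_right_mono) (auto simp: m_def)
    also have "\<dots> = t * h_fn \<nu> \<epsilon> / \<epsilon>"
      using \<open>0 < \<tau>\<close> by simp
    finally show "m * (t / \<tau>) \<le> t * h_fn \<nu> \<epsilon> / \<epsilon>" .
  qed
  finally show ?thesis .
qed

lemma g_tilde_far_antimono:
  assumes "0 < \<tau>" "0 < \<epsilon>" "\<epsilon> \<le> \<bar>y\<bar>" "\<bar>y\<bar> \<le> \<bar>y'\<bar>"
  shows "g_tilde \<nu> d \<alpha> \<beta> \<tau> \<epsilon> t y' \<le> g_tilde \<nu> d \<alpha> \<beta> \<tau> \<epsilon> t y"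
proof -
  define K where "K = min (1 / h_inv \<nu> (1 / \<tau>)) (\<tau> * h_fn \<nu> \<epsilon> / \<epsilon>) * exp \<epsilon>
    / \<tau> powr ((real d + \<beta> - 1) / \<alpha>) * t powr ((real d + \<beta> - 1) / \<alpha>)"
  have g_far: "g_tilde \<nu> d \<alpha> \<beta> \<tau> \<epsilon> t z = K * exp (- \<bar>z\<bar>)" if "\<epsilon> \<le> \<bar>z\<bar>" for z
    using that by (simp add: g_tilde_def K_def)
  have "0 \<le> K"
    using assms h_inv_pos[of "1 / \<tau>"] h_fn_nonneg[of \<nu> \<epsilon>] by (simp add: K_def)
  then show ?thesis
    using assms by (simp add: g_far mult_left_mono)
qed

lemma g_tilde_antimono:
  assumes "0 < \<alpha>" "\<alpha> \<le> real d + \<beta> - 1" "0 < t" "t \<le> \<tau>" "0 < \<epsilon>" "\<bar>y\<bar> \<le> \<bar>y'\<bar>"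
  shows "g_tilde \<nu> d \<alpha> \<beta> \<tau> \<epsilon> t y' \<le> g_tilde \<nu> d \<alpha> \<beta> \<tau> \<epsilon> t y"
proof -
  consider "\<bar>y'\<bar> < \<epsilon>" | "\<epsilon> \<le> \<bar>y\<bar>" | "\<bar>y\<bar> < \<epsilon>" "\<epsilon> \<le> \<bar>y'\<bar>"
    by linarith
  then show ?thesis
  proof cases
    case 1
    then show ?thesis
      using assms by (intro g_tilde_near_antimono) auto
  next
    case 2
    then show ?thesis
      using assms by (intro g_tilde_far_antimono) auto
  next
    case 3
    then show ?thesis
      using assms g_tilde_far_upper_bound g_tilde_near_lower_bound by (meson less_imp_le order_trans)
  qed
qed

end

theorem lemma2p9:
  fixes \<nu> \<nu>' :: "real \<Rightarrow> real"
    and \<eta>4 \<alpha> \<beta> C_low C_up \<tau> \<epsilon> t x x' :: real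
    and d :: nat
  assumes nu_meas: "\<nu> \<in> borel_measurable borel"
    and nu_nonneg: "\<And>y. \<nu> y \<ge> 0"
    and nu_sym: "\<And>y. \<nu> (- y) = \<nu> y"
    and nu_levy: "(\<integral>\<^sup>+ y. ennreal (min (y\<^sup>2) 1 * \<nu> y) \<partial>lborel) < \<infinity>"
    and nu_infinite: "(\<integral>\<^sup>+ y. ennreal (\<nu> y) \<partial>lborel) = \<infinity>"
    and eta4_pos: "\<eta>4 > 0"
    and nu_deriv: "\<And>y. 0 < y \<Longrightarrow> y < \<eta>4 \<Longrightarrow> (\<nu> has_real_derivative \<nu>' y) (at y)"
    and nu_C1: "continuous_on {0<..<\<eta>4} \<nu>'"
    and nu'_neg: "\<And>y. 0 < y \<Longrightarrow> y < \<eta>4 \<Longrightarrow> \<nu>' y < 0"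
    and nu'_ratio_decr: "\<And>y z. 0 < y \<Longrightarrow> y \<le> z \<Longrightarrow> z < \<eta>4 \<Longrightarrow>
                          - \<nu>' z / z \<le> - \<nu>' y / y"
    and alpha_pos: "0 < \<alpha>" and alpha_le_beta: "\<alpha> \<le> \<beta>" and beta_lt2: "\<beta> < 2"
    and C_low_pos: "C_low > 0" and C_up_pos: "C_up > 0"
    and lower_scaling: "\<And>lam \<theta>. 1 \<le> lam \<Longrightarrow> 0 \<le> \<theta> \<Longrightarrow>
                          psi_fn \<nu> (lam * \<theta>) \<ge> C_low * lam powr \<alpha> * psi_fn \<nu> \<theta>"
    and upper_scaling: "\<And>lam \<theta>. 1 \<le> lam \<Longrightarrow> 1 \<le> \<theta> \<Longrightarrow>
                          psi_fn \<nu> (lam * \<theta>) \<le> C_up * lam powr \<beta> * psi_fn \<nu> \<theta>"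
    and d_ge: "d \<ge> 2"
    and tau_pos: "\<tau> > 0"
    and eps_pos: "0 < \<epsilon>" and eps_le1: "\<epsilon> \<le> 1"
    and t_pos: "0 < t" and t_le: "t \<le> \<tau>"
    and close_h: "\<bar>x - x'\<bar> \<le> h_inv \<nu> (1 / t) / 4"
    and close_eps: "\<bar>x - x'\<bar> \<le> \<epsilon> / 4"
  shows "g_tilde \<nu> d \<alpha> \<beta> \<tau> \<epsilon> t x' \<le> g_tilde \<nu> d \<alpha> \<beta> \<tau> \<epsilon> t (x / 2)"
proof -
  interpret infinite_levy_density \<nu>
    using nu_meas nu_nonneg nu_levy nu_infinite by unfold_locales
  have "\<alpha> \<le> real d + \<beta> - 1"
    using d_ge alpha_le_beta by simp
  note antimono = g_tilde_antimono[OF alpha_pos this t_pos t_le eps_pos]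
  show ?thesis
  proof (cases "\<bar>x / 2\<bar> \<le> \<bar>x'\<bar>")
    case True
    then show ?thesis
      by (rule antimono)
  next
    case False
    then have "\<bar>x / 2\<bar> < \<bar>x - x'\<bar>"
      by linarith
    then have "g_tilde \<nu> d \<alpha> \<beta> \<tau> \<epsilon> t (x / 2) = g_tilde \<nu> d \<alpha> \<beta> \<tau> \<epsilon> t 0"
      using close_h close_eps eps_pos t_pos h_inv_pos[of "1 / t"]
      by (simp add: g_tilde_eq_max del: abs_divide)
    moreover have "g_tilde \<nu> d \<alpha> \<beta> \<tau> \<epsilon> t x' \<le> g_tilde \<nu> d \<alpha> \<beta> \<tau> \<epsilon> t 0"
      by (rule antimono) simp
    ultimately show ?thesis
      by simp
  qed
qed

end
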